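(* Let $n\ge1$ and let $\Phi:\mathbb{R}^{n+1}\to[0,+\infty)$ be a norm. Let $\psi(\widehat\xi):=\Phi(\widehat\xi,0)$ for $\widehat\xi\in\mathbb{R}^n$ (a norm on $\mathbb{R}^n$) with dual norm $\psi^o$. Then $\psi^o(\widehat\xi^* )\le\Phi^o(\widehat\xi^*,0)$ for all $\widehat\xi^*\in\mathbb{R}^n$, and equality $\psi^o(\widehat\xi^* )=\Phi^o(\widehat\xi^*,0)$ holds for all $\widehat\xi^*\in\mathbb{R}^n$ if and only if $\Phi(\widehat\xi,\xi_{n+1})\ge\Phi(\widehat\xi,0)$ for all $(\widehat\xi,\xi_{n+1})\in\mathbb{R}^{n+1}$.
   Context: A norm on $\mathbb{R}^m$ is a convex function $\Psi:\mathbb{R}^m\to[0,+\infty)$ with $\Psi(\lambda\xi)=|\lambda|\Psi(\xi)$ and $\Psi(\xi)\ge c|\xi|$ for some $c>0$; its dual norm is $\Psi^o(\xi^* )=\sup\{\xi^*\cdot\xi:\Psi(\xi)\le1\}$. *)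

theory Defs
  imports "HOL-Analysis.Analysis"
begin

definition is_norm_fun :: "('a::real_inner \<Rightarrow> real) \<Rightarrow> bool" where
  "is_norm_fun \<Psi> \<longleftrightarrow>
     convex_on UNIV \<Psi> \<and> (\<forall>x. 0 \<le> \<Psi> x) \<and>
     (\<forall>l x. \<Psi> (l *\<^sub>R x) = \<bar>l\<bar> * \<Psi> x) \<and>
     (\<exists>c>0. \<forall>x. c * norm x \<le> \<Psi> x)"

definition dual_norm :: "('a::real_inner \<Rightarrow> real) \<Rightarrow> 'a \<Rightarrow> real" where
  "dual_norm \<Psi> y = Sup {y \<bullet> x | x. \<Psi> x \<le> 1}"

end

theory Submission
  imports Defs
begin

text \<open>Restricting \<Phi> to the hyperplane t = 0 shrinks the unit ball over which the dual norm
  takes its supremum, which gives the inequality. If \<Phi>(x,0) \<le> \<Phi>(x,t) always, the unit ball of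
  \<Phi> projects into that of \<psi>, so the suprema agree. Conversely, if \<Phi>(x,t) < \<Phi>(x,0) for some
  (x,t), rescaling gives a point x outside the unit ball of \<psi> with \<Phi>(x,t) \<le> 1; a hyperplane
  separating x from the closed convex unit ball of \<psi> yields a functional y whose \<psi>-dual norm
  is strictly smaller than the \<Phi>-dual norm of (y,0).\<close>

lemma is_norm_fun_zero:
  assumes "is_norm_fun \<Psi>"
  shows "\<Psi> 0 = 0"
  using assms unfolding is_norm_fun_def by (metis abs_zero mult_zero_left scale_zero_left)

lemma dual_norm_set_nonempty:
  assumes "is_norm_fun \<Psi>"
  shows "{y \<bullet> x | x. \<Psi> x \<le> 1} \<noteq> {}"
  using is_norm_fun_zero[OF assms] by (metis (mono_tags, lifting) empty_Collect_eq order_refl zero_le_one)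

lemma dual_norm_set_bdd_above:
  assumes "is_norm_fun \<Psi>"
  shows "bdd_above {y \<bullet> x | x. \<Psi> x \<le> 1}"
proof -
  obtain c where c: "c > 0" "\<And>x. c * norm x \<le> \<Psi> x"
    using assms unfolding is_norm_fun_def by blast
  have "y \<bullet> x \<le> norm y / c" if "\<Psi> x \<le> 1" for x
  proof -
    have "norm x \<le> 1 / c"
      using c(2)[of x] that c(1) by (simp add: field_simps)
    hence "norm y * norm x \<le> norm y / c"
      by (metis mult_left_mono norm_ge_zero times_divide_eq_right mult.right_neutral)
    thus ?thesis using norm_cauchy_schwarz[of y x] by linarith
  qed
  thus ?thesis unfolding bdd_above_def by blast
qed

lemma dual_norm_upper:
  assumes "is_norm_fun \<Psi>" "\<Psi> x \<le> 1"
  shows "y \<bullet> x \<le> dual_norm \<Psi> y"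
  unfolding dual_norm_def
  by (rule cSup_upper[OF _ dual_norm_set_bdd_above[OF assms(1)]]) (use assms(2) in blast)

lemma dual_norm_least:
  assumes "is_norm_fun \<Psi>" "\<And>x. \<Psi> x \<le> 1 \<Longrightarrow> y \<bullet> x \<le> b"
  shows "dual_norm \<Psi> y \<le> b"
  unfolding dual_norm_def
  by (rule cSup_least[OF dual_norm_set_nonempty[OF assms(1)]]) (use assms(2) in blast)

lemma is_norm_fun_restrict_fst:
  assumes "is_norm_fun \<Phi>"
  shows "is_norm_fun (\<lambda>x. \<Phi> (x, 0))"
proof -
  have cvx: "convex_on UNIV \<Phi>" and hom: "\<And>l z. \<Phi> (l *\<^sub>R z) = \<bar>l\<bar> * \<Phi> z"
    using assms unfolding is_norm_fun_def by auto
  obtain c where "c > 0" "\<And>z. c * norm z \<le> \<Phi> z"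
    using assms unfolding is_norm_fun_def by blast
  hence "\<forall>x. c * norm x \<le> \<Phi> (x, 0)" by (metis norm_Pair norm_zero power2_eq_square
      mult_zero_left add_0_right real_sqrt_abs abs_norm_cancel)
  moreover have "convex_on UNIV (\<lambda>x. \<Phi> (x, 0))"
  proof (rule convex_onI)
    fix t :: real and x y assume "0 < t" "t < 1"
    thus "\<Phi> ((1 - t) *\<^sub>R x + t *\<^sub>R y, 0) \<le> (1 - t) * \<Phi> (x, 0) + t * \<Phi> (y, 0)"
      using convex_onD[OF cvx, of t "(x, 0)" "(y, 0)"] by simp
  qed simp
  moreover have "\<forall>l x. \<Phi> (l *\<^sub>R x, 0) = \<bar>l\<bar> * \<Phi> (x, 0)"
    using hom by (metis scaleR_Pair scale_zero_right)
  ultimately show ?thesis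
    using assms \<open>c > 0\<close> unfolding is_norm_fun_def by blast
qed

lemma is_norm_fun_separate_levels:
  assumes "is_norm_fun \<Psi>" "\<Psi> z < \<Psi> w"
  obtains l where "\<Psi> (l *\<^sub>R z) \<le> 1" "1 < \<Psi> (l *\<^sub>R w)"
proof
  let ?l = "2 / (\<Psi> z + \<Psi> w)"
  have hom: "\<And>l x. \<Psi> (l *\<^sub>R x) = \<bar>l\<bar> * \<Psi> x" and "0 \<le> \<Psi> z"
    using assms(1) unfolding is_norm_fun_def by auto
  hence pos: "0 < \<Psi> z + \<Psi> w" using assms(2) by linarith
  show "\<Psi> (?l *\<^sub>R z) \<le> 1" "1 < \<Psi> (?l *\<^sub>R w)"
    unfolding hom using pos assms(2) by (simp_all add: field_simps)
qed

lemma convex_on_sublevel_set: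
  assumes "convex_on UNIV f"
  shows "convex {x. f x \<le> c}"
proof (rule convexI)
  fix a b and u v :: real
  assume "a \<in> {x. f x \<le> c}" "b \<in> {x. f x \<le> c}" "0 \<le> u" "0 \<le> v" "u + v = 1"
  moreover have "f (u *\<^sub>R a + v *\<^sub>R b) \<le> u * f a + v * f b"
    using convex_onD[OF assms, of v a b] calculation by (simp add: eq_diff_eq[symmetric])
  moreover have "u * f a + v * f b \<le> u * c + v * c"
    using calculation by (intro add_mono mult_left_mono) auto
  ultimately show "u *\<^sub>R a + v *\<^sub>R b \<in> {x. f x \<le> c}"
    by (simp add: distrib_right[symmetric])
qed

lemma dual_norm_separates_outside_unit_ball:
  fixes \<Psi> :: "'a::euclidean_space \<Rightarrow> real"
  assumes "is_norm_fun \<Psi>" "1 < \<Psi> x"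
  obtains y where "dual_norm \<Psi> y < y \<bullet> x"
proof -
  let ?K = "{z. \<Psi> z \<le> 1}"
  have cvx: "convex_on UNIV \<Psi>" using assms(1) unfolding is_norm_fun_def by blast
  have "closed ?K"
    using convex_on_continuous[OF open_UNIV cvx] by (intro closed_Collect_le) auto
  moreover have "x \<notin> ?K" using assms(2) by simp
  ultimately obtain a b where ab: "a \<bullet> x < b" "\<forall>z\<in>?K. b < a \<bullet> z"
    using separating_hyperplane_closed_point[OF convex_on_sublevel_set[OF cvx]] by blast
  have "dual_norm \<Psi> (- a) \<le> - b"
    using ab(2) by (intro dual_norm_least[OF assms(1)]) fastforce
  with ab(1) have "dual_norm \<Psi> (- a) < - a \<bullet> x" by simp
  thus thesis by (rule that)
qed

theorem lemmaA4:
  fixes \<Phi> :: "(real^'n) \<times> real \<Rightarrow> real"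
  assumes "is_norm_fun \<Phi>"
  defines "\<psi> \<equiv> (\<lambda>x. \<Phi> (x, 0))"
  shows "(\<forall>y. dual_norm \<psi> y \<le> dual_norm \<Phi> (y, 0)) \<and>
         ((\<forall>y. dual_norm \<psi> y = dual_norm \<Phi> (y, 0)) \<longleftrightarrow>
          (\<forall>x t. \<Phi> (x, 0) \<le> \<Phi> (x, t)))"
proof -
  have \<psi>: "is_norm_fun \<psi>" unfolding \<psi>_def by (rule is_norm_fun_restrict_fst[OF assms(1)])
  have le: "dual_norm \<psi> y \<le> dual_norm \<Phi> (y, 0)" for y
    using dual_norm_upper[OF assms(1), of "(_, 0)" "(y, 0)"]
    by (intro dual_norm_least[OF \<psi>]) (simp add: \<psi>_def)
  have "dual_norm \<Phi> (y, 0) \<le> dual_norm \<psi> y" if "\<forall>x t. \<Phi> (x, 0) \<le> \<Phi> (x, t)" for y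
  proof (intro dual_norm_least[OF assms(1)])
    fix z :: "(real^'n) \<times> real" assume "\<Phi> z \<le> 1"
    with that have "\<psi> (fst z) \<le> 1" unfolding \<psi>_def by (metis order_trans prod.collapse)
    thus "(y, 0) \<bullet> z \<le> dual_norm \<psi> y" using dual_norm_upper[OF \<psi>] by (cases z) simp
  qed
  moreover have "\<Phi> (x, 0) \<le> \<Phi> (x, t)" if "\<forall>y. dual_norm \<psi> y = dual_norm \<Phi> (y, 0)" for x t
  proof (rule ccontr)
    assume "\<not> ?thesis"
    then obtain l where "\<Phi> (l *\<^sub>R x, l * t) \<le> 1" "1 < \<psi> (l *\<^sub>R x)"
      using is_norm_fun_separate_levels[OF assms(1), of "(x, t)" "(x, 0)"] by (auto simp: \<psi>_def)
    moreover obtain y where "dual_norm \<psi> y < y \<bullet> (l *\<^sub>R x)"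
      using dual_norm_separates_outside_unit_ball[OF \<psi> calculation(2)] .
    ultimately show False
      using that dual_norm_upper[OF assms(1), of "(l *\<^sub>R x, l * t)" "(y, 0)"] by simp
  qed
  ultimately show ?thesis using le by (meson order_antisym)
qed

end
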